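(* Let $P$ be a three-dimensional zonotope which is not a prism, and let $E$ be an edge of $P$ with $\#B(E)=10$. Then there exists an edge $M$ of $P$ not parallel to $E$ with $\#B(M)\ge 8$.
   Context: A zonotope is a Minkowski sum of finitely many segments. For an edge $E$ of a three-dimensional zonotope $P$, the belt $B(E)$ is the set of facets of $P$ containing a translate of $E$ as an edge, and $\#B(E)$ is the number of facets in it. A prism (cylinder) is a set $Q+S$ with $Q$ a convex polygon and $S$ a segment not parallel to the plane of $Q$. *)

theory Defs
  imports "HOL-Analysis.Analysis"
begin

definition msum :: "'a::euclidean_space set \<Rightarrow> 'a set \<Rightarrow> 'a set" where
  "msum A B = {x + y | x y. x \<in> A \<and> y \<in> B}"

definition segsum :: "('a::euclidean_space \<times> 'a) list \<Rightarrow> 'a set" where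
  "segsum segs = foldr (\<lambda>(a, b) S. msum (closed_segment a b) S) segs {0}"

definition zonotope :: "'a::euclidean_space set \<Rightarrow> bool" where
  "zonotope P \<longleftrightarrow> (\<exists>segs. P = segsum segs)"

definition dirspace :: "'a::euclidean_space set \<Rightarrow> 'a set" where
  "dirspace S = span {x - y | x y. x \<in> S \<and> y \<in> S}"

definition prism :: "'a::euclidean_space set \<Rightarrow> bool" where
  "prism P \<longleftrightarrow> (\<exists>Q a b. polytope Q \<and> aff_dim Q = 2 \<and> b - a \<notin> dirspace Q
                        \<and> P = msum Q (closed_segment a b))"

definition belt :: "'a::euclidean_space set \<Rightarrow> 'a set \<Rightarrow> 'a set set" where
  "belt P E = {F. F facet_of P \<and> (\<exists>t. ((\<lambda>x. t + x) ` E) edge_of F)}"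

definition parallel_sets :: "'a::euclidean_space set \<Rightarrow> 'a set \<Rightarrow> bool" where
  "parallel_sets E M \<longleftrightarrow> dirspace E = dirspace M"

end

theory Submission
  imports Defs
begin

text \<open>Write the zonotope as \<open>P = z + \<Sum>\<^sub>i [0,1] v\<^sub>i\<close>. The face of \<open>P\<close> on which a linear
  functional \<open>c\<close> is maximal is a translate of the zonotope generated by the \<open>v\<^sub>i\<close> orthogonal to
  \<open>c\<close>. Hence an edge is parallel to a generator \<open>g\<close>, every facet of its belt is parallel to a
  plane \<open>span {g, v}\<close> with \<open>v\<close> a generator, and each such plane carries at most the two opposite
  facets. Conversely, for an edge whose normal is generic in \<open>g\<^sup>\<bottom>\<close>, both facets of every such
  plane lie in its belt. So \<open>#B(E) = 10\<close> forces \<open>g\<close> to lie on at least five planes spanned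
  by generators, and it suffices to find a generator \<open>h\<close> not parallel to \<open>g\<close> lying on four.

  If there is none, pick generators \<open>A\<^sub>1, \<dots>, A\<^sub>5\<close> on five distinct planes through \<open>g\<close> and look
  at the planes \<open>span {A\<^sub>1, A\<^sub>j}\<close>: since \<open>A\<^sub>1\<close> lies on at most three planes, one of which is
  \<open>span {A\<^sub>1, g}\<close>, three of the \<open>A\<^sub>j\<close> are coplanar with \<open>A\<^sub>1\<close> (two coplanar pairs are ruled out
  by looking from one of the points). A generator off that plane would see four distinct
  planes through it, so all generators not parallel to \<open>g\<close> lie in a plane missing \<open>g\<close>, and
  \<open>P\<close> is a prism.\<close>

section \<open>Zonotopes as sums of generators\<close>

lemma msum_eq_set_plus: "msum A B = A + B"
  unfolding msum_def set_plus_def by auto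

lemma segsum_Nil [simp]: "segsum [] = {0}"
  by (simp add: segsum_def)

lemma segsum_Cons [simp]: "segsum ((a, b) # segs) = closed_segment a b + segsum segs"
  by (simp add: segsum_def msum_eq_set_plus)

lemma segsum_filter_split:
  "segsum segs = segsum (filter p segs) + segsum (filter (\<lambda>s. \<not> p s) segs)"
  by (induction segs) (auto simp: add_ac)

lemma polytope_set_plus:
  fixes S T :: "'a::euclidean_space set"
  assumes "polytope S" "polytope T"
  shows "polytope (S + T)"
  using assms unfolding polytope_def by (metis convex_hull_set_plus finite_set_plus)

lemma polytope_segsum: "polytope (segsum segs)"
  by (induction segs)
    (auto simp: polytope_sing polytope_set_plus segment_convex_hull polytope_convex_hull)

definition zonotope_of :: "'a::real_vector \<Rightarrow> 'a list \<Rightarrow> 'a set" where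
  "zonotope_of z vs = {z + (\<Sum>i<length vs. t i *\<^sub>R vs!i) | t. \<forall>i<length vs. 0 \<le> t i \<and> t i \<le> 1}"

lemma zonotope_ofI:
  "\<forall>i<length vs. 0 \<le> t i \<and> t i \<le> 1 \<Longrightarrow> z + (\<Sum>i<length vs. t i *\<^sub>R vs!i) \<in> zonotope_of z vs"
  unfolding zonotope_of_def by auto

lemma zonotope_ofE:
  assumes "x \<in> zonotope_of z vs"
  obtains t where "\<forall>i<length vs. 0 \<le> t i \<and> t i \<le> 1" "x = z + (\<Sum>i<length vs. t i *\<^sub>R vs!i)"
  using assms unfolding zonotope_of_def by auto

lemma closed_segment_eq_param: "closed_segment a b = {a + u *\<^sub>R (b - a) | u. 0 \<le> u \<and> u \<le> 1}"
  by (simp add: segment_convex_hull convex_hull_2_alt)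

lemma closed_segment_plus_zonotope_of:
  "closed_segment a b + zonotope_of z vs = zonotope_of (a + z) ((b - a) # vs)"
proof -
  have sum_Cons: "(\<Sum>i<length ((b - a) # vs). t i *\<^sub>R ((b - a) # vs)!i)
      = t 0 *\<^sub>R (b - a) + (\<Sum>i<length vs. t (Suc i) *\<^sub>R vs!i)" for t
    by (simp only: length_Cons sum.lessThan_Suc_shift) simp
  show ?thesis
  proof (rule set_eqI, rule iffI)
    fix x assume "x \<in> closed_segment a b + zonotope_of z vs"
    then obtain u t where u: "0 \<le> u" "u \<le> 1" and t: "\<forall>i<length vs. 0 \<le> t i \<and> t i \<le> 1"
      and x: "x = (a + u *\<^sub>R (b - a)) + (z + (\<Sum>i<length vs. t i *\<^sub>R vs!i))"
      unfolding closed_segment_eq_param zonotope_of_def set_plus_def by blast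
    have "\<forall>i<length ((b - a) # vs). 0 \<le> case_nat u t i \<and> case_nat u t i \<le> 1"
      using u t by (auto split: nat.splits)
    moreover have "x = (a + z) + (\<Sum>i<length ((b - a) # vs). case_nat u t i *\<^sub>R ((b - a) # vs)!i)"
      unfolding sum_Cons x by (simp add: algebra_simps)
    ultimately show "x \<in> zonotope_of (a + z) ((b - a) # vs)"
      unfolding zonotope_of_def by blast
  next
    fix x assume "x \<in> zonotope_of (a + z) ((b - a) # vs)"
    then obtain t where t: "\<forall>i<Suc (length vs). 0 \<le> t i \<and> t i \<le> 1"
      and x: "x = (a + z) + (\<Sum>i<length ((b - a) # vs). t i *\<^sub>R ((b - a) # vs)!i)"
      unfolding zonotope_of_def by auto
    have "a + t 0 *\<^sub>R (b - a) \<in> closed_segment a b"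
      using t unfolding closed_segment_eq_param by auto
    moreover have "z + (\<Sum>i<length vs. t (Suc i) *\<^sub>R vs!i) \<in> zonotope_of z vs"
      using t unfolding zonotope_of_def by auto
    moreover have "x = (a + t 0 *\<^sub>R (b - a)) + (z + (\<Sum>i<length vs. t (Suc i) *\<^sub>R vs!i))"
      unfolding x sum_Cons by (simp add: algebra_simps)
    ultimately show "x \<in> closed_segment a b + zonotope_of z vs"
      unfolding set_plus_def by blast
  qed
qed

lemma segsum_eq_zonotope_of:
  "segsum segs = zonotope_of (sum_list (map fst segs)) (map (\<lambda>(a, b). b - a) segs)"
proof (induction segs)
  case Nil
  then show ?case by (simp add: zonotope_of_def)
next
  case (Cons s segs)
  then show ?case by (cases s) (simp add: closed_segment_plus_zonotope_of)
qed

lemma zonotope_of_eq_translation: "zonotope_of z vs = (+) z ` zonotope_of 0 vs"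
  unfolding zonotope_of_def by auto

lemma polytope_zonotope_of:
  fixes z :: "'a::euclidean_space"
  shows "polytope (zonotope_of z vs)"
proof -
  have "zonotope_of 0 vs = segsum (map (\<lambda>v. (0, v)) vs)"
    by (simp add: segsum_eq_zonotope_of comp_def)
  then show ?thesis
    by (simp add: zonotope_of_eq_translation[of z] polytope_translation_eq polytope_segsum)
qed

section \<open>Faces maximising a linear functional\<close>

definition max_face :: "'a::real_inner set \<Rightarrow> 'a \<Rightarrow> 'a set" where
  "max_face P c = {x\<in>P. \<forall>y\<in>P. c \<bullet> y \<le> c \<bullet> x}"

lemma max_face_subset: "max_face P c \<subseteq> P"
  unfolding max_face_def by blast

lemma max_face_zero [simp]: "max_face P 0 = P"
  unfolding max_face_def by auto

lemma max_face_scaleR: "0 < l \<Longrightarrow> max_face P (l *\<^sub>R c) = max_face P c"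
  unfolding max_face_def by simp

lemma max_face_face_of:
  assumes "convex P"
  shows "max_face P c face_of P"
proof (cases "max_face P c = {}")
  case False
  then obtain x0 where x0: "x0 \<in> P" "\<forall>y\<in>P. c \<bullet> y \<le> c \<bullet> x0"
    unfolding max_face_def by blast
  then have "max_face P c = P \<inter> {x. c \<bullet> x = c \<bullet> x0}"
    unfolding max_face_def by (auto intro: order.antisym)
  with x0 show ?thesis
    using face_of_Int_supporting_hyperplane_le[OF assms, of c "c \<bullet> x0"] by simp
qed simp

lemma face_of_polyhedron_eq_max_face:
  fixes P :: "'a::euclidean_space set"
  assumes "polyhedron P" "F face_of P" "F \<noteq> {}"
  obtains c where "F = max_face P c"
proof -
  have "F exposed_face_of P"
    using assms exposed_face_of_polyhedron by blast
  then obtain a b where ab: "P \<subseteq> {x. a \<bullet> x \<le> b}" "F = P \<inter> {x. a \<bullet> x = b}"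
    unfolding exposed_face_of_def by blast
  obtain x0 where x0: "x0 \<in> P" "a \<bullet> x0 = b"
    using assms(3) ab(2) by blast
  have "F = max_face P a"
  proof
    show "F \<subseteq> max_face P a" using ab unfolding max_face_def by auto
    show "max_face P a \<subseteq> F" using ab x0 unfolding max_face_def by fastforce
  qed
  then show ?thesis by (rule that)
qed

definition face_params :: "'a::real_inner list \<Rightarrow> 'a \<Rightarrow> (nat \<Rightarrow> real) \<Rightarrow> bool" where
  "face_params vs c t \<longleftrightarrow> (\<forall>i<length vs. 0 \<le> t i \<and> t i \<le> 1
     \<and> (0 < c \<bullet> vs!i \<longrightarrow> t i = 1) \<and> (c \<bullet> vs!i < 0 \<longrightarrow> t i = 0))"

definition vertex_params :: "'a::real_inner list \<Rightarrow> 'a \<Rightarrow> nat \<Rightarrow> real" where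
  "vertex_params vs c i = (if 0 < c \<bullet> vs!i then 1 else 0)"

lemma face_params_vertex_params: "face_params vs c (vertex_params vs c)"
  unfolding face_params_def vertex_params_def by auto

lemma face_params_forced:
  "face_params vs c t \<Longrightarrow> i < length vs \<Longrightarrow> c \<bullet> vs!i \<noteq> 0 \<Longrightarrow> t i = vertex_params vs c i"
  unfolding face_params_def vertex_params_def by (metis linorder_neqE_linordered_idom)

lemma mult_le_max_zero: "0 \<le> t \<Longrightarrow> t \<le> 1 \<Longrightarrow> t * a \<le> max 0 (a::real)"
  by (cases "0 \<le> a") (auto simp: mult_left_le_one_le mult_nonneg_nonpos)

lemma mult_eq_max_zero_iff:
  "0 \<le> t \<Longrightarrow> t \<le> 1 \<Longrightarrow> t * a = max 0 (a::real) \<longleftrightarrow> (0 < a \<longrightarrow> t = 1) \<and> (a < 0 \<longrightarrow> t = 0)"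
  by (cases a "0::real" rule: linorder_cases) (auto simp: max_def)

lemma inner_sum_le_sum_max:
  assumes "\<forall>i<length vs. 0 \<le> t i \<and> t i \<le> 1"
  shows "c \<bullet> (\<Sum>i<length vs. t i *\<^sub>R vs!i) \<le> (\<Sum>i<length vs. max 0 (c \<bullet> vs!i))"
  unfolding inner_sum_right using assms by (auto intro!: sum_mono mult_le_max_zero)

lemma inner_sum_eq_sum_max_iff:
  assumes "\<forall>i<length vs. 0 \<le> t i \<and> t i \<le> 1"
  shows "c \<bullet> (\<Sum>i<length vs. t i *\<^sub>R vs!i) = (\<Sum>i<length vs. max 0 (c \<bullet> vs!i))
    \<longleftrightarrow> face_params vs c t"
proof -
  have "c \<bullet> (\<Sum>i<length vs. t i *\<^sub>R vs!i) = (\<Sum>i<length vs. max 0 (c \<bullet> vs!i))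
      \<longleftrightarrow> (\<Sum>i<length vs. max 0 (c \<bullet> vs!i) - t i * (c \<bullet> vs!i)) = 0"
    by (auto simp: inner_sum_right sum_subtractf)
  also have "\<dots> \<longleftrightarrow> (\<forall>i<length vs. t i * (c \<bullet> vs!i) = max 0 (c \<bullet> vs!i))"
    using assms mult_le_max_zero by (subst sum_nonneg_eq_0_iff) auto
  also have "\<dots> \<longleftrightarrow> face_params vs c t"
    using assms mult_eq_max_zero_iff unfolding face_params_def by auto
  finally show ?thesis .
qed

lemma max_face_zonotope_of_eq_level_set:
  "max_face (zonotope_of z vs) c
    = {x \<in> zonotope_of z vs. c \<bullet> x = c \<bullet> z + (\<Sum>i<length vs. max 0 (c \<bullet> vs!i))}"
proof -
  let ?m = "c \<bullet> z + (\<Sum>i<length vs. max 0 (c \<bullet> vs!i))"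
  have le: "c \<bullet> x \<le> ?m" if x: "x \<in> zonotope_of z vs" for x
  proof -
    obtain t where "\<forall>i<length vs. 0 \<le> t i \<and> t i \<le> 1" "x = z + (\<Sum>i<length vs. t i *\<^sub>R vs!i)"
      using x by (rule zonotope_ofE)
    then show ?thesis using inner_sum_le_sum_max[of vs t c] by (simp add: inner_add_right)
  qed
  define x0 where "x0 = z + (\<Sum>i<length vs. vertex_params vs c i *\<^sub>R vs!i)"
  have box: "\<forall>i<length vs. 0 \<le> vertex_params vs c i \<and> vertex_params vs c i \<le> 1"
    using face_params_vertex_params unfolding face_params_def by blast
  have x0: "x0 \<in> zonotope_of z vs" "c \<bullet> x0 = ?m"
    unfolding x0_def using zonotope_ofI[OF box] inner_sum_eq_sum_max_iff[OF box]
      face_params_vertex_params by (simp_all add: inner_add_right)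
  show ?thesis
  proof (intro set_eqI iffI)
    fix x assume x: "x \<in> max_face (zonotope_of z vs) c"
    then have "x \<in> zonotope_of z vs" "c \<bullet> x0 \<le> c \<bullet> x"
      using x0(1) unfolding max_face_def by simp_all
    then show "x \<in> {x \<in> zonotope_of z vs. c \<bullet> x = ?m}"
      using le[of x] x0(2) by simp
  next
    fix x assume "x \<in> {x \<in> zonotope_of z vs. c \<bullet> x = ?m}"
    then show "x \<in> max_face (zonotope_of z vs) c"
      using le unfolding max_face_def by simp
  qed
qed

lemma max_face_zonotope_of:
  "max_face (zonotope_of z vs) c = {z + (\<Sum>i<length vs. t i *\<^sub>R vs!i) | t. face_params vs c t}"
proof (intro set_eqI iffI)
  let ?m = "c \<bullet> z + (\<Sum>i<length vs. max 0 (c \<bullet> vs!i))"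
  have eq_iff: "c \<bullet> (z + (\<Sum>i<length vs. t i *\<^sub>R vs!i)) = ?m \<longleftrightarrow> face_params vs c t"
    if "\<forall>i<length vs. 0 \<le> t i \<and> t i \<le> 1" for t
    using inner_sum_eq_sum_max_iff[OF that] by (simp add: inner_add_right)
  {
    fix x assume "x \<in> max_face (zonotope_of z vs) c"
    then have xZ: "x \<in> zonotope_of z vs" and cx: "c \<bullet> x = ?m"
      unfolding max_face_zonotope_of_eq_level_set by simp_all
    obtain t where t: "\<forall>i<length vs. 0 \<le> t i \<and> t i \<le> 1" "x = z + (\<Sum>i<length vs. t i *\<^sub>R vs!i)"
      using xZ by (rule zonotope_ofE)
    then have "face_params vs c t" using eq_iff[OF t(1)] cx by simp
    with t(2) show "x \<in> {z + (\<Sum>i<length vs. t i *\<^sub>R vs!i) | t. face_params vs c t}"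
      by blast
  next
    fix x assume "x \<in> {z + (\<Sum>i<length vs. t i *\<^sub>R vs!i) | t. face_params vs c t}"
    then obtain t where t: "face_params vs c t" "x = z + (\<Sum>i<length vs. t i *\<^sub>R vs!i)"
      by blast
    then have box: "\<forall>i<length vs. 0 \<le> t i \<and> t i \<le> 1"
      unfolding face_params_def by blast
    show "x \<in> max_face (zonotope_of z vs) c"
      unfolding max_face_zonotope_of_eq_level_set
      using eq_iff[OF box] zonotope_ofI[OF box] t by simp
  }
qed

lemma max_face_zonotope_of_nonempty: "max_face (zonotope_of z vs) c \<noteq> {}"
  unfolding max_face_zonotope_of using face_params_vertex_params by blast

definition orth_span :: "'a::real_inner list \<Rightarrow> 'a \<Rightarrow> 'a set" where
  "orth_span vs c = span {v \<in> set vs. c \<bullet> v = 0}"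

lemma subspace_orth_span [simp]: "subspace (orth_span vs c)"
  unfolding orth_span_def by simp

lemma orth_span_subset_hyperplane: "orth_span vs c \<subseteq> {x. c \<bullet> x = 0}"
  unfolding orth_span_def by (rule span_minimal) (auto simp: subspace_hyperplane)

lemma mem_orth_span_iff: "v \<in> set vs \<Longrightarrow> v \<in> orth_span vs c \<longleftrightarrow> c \<bullet> v = 0"
  using orth_span_subset_hyperplane[of vs c] unfolding orth_span_def by (auto intro: span_base)

lemma orth_span_uminus [simp]: "orth_span vs (- c) = orth_span vs c"
  unfolding orth_span_def by simp

lemma orth_span_zero [simp]: "orth_span vs 0 = span (set vs)"
  unfolding orth_span_def by simp

lemma dirspace_mono: "S \<subseteq> T \<Longrightarrow> dirspace S \<subseteq> dirspace T"
  unfolding dirspace_def by (rule span_mono) blast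

lemma dirspace_translation [simp]: "dirspace ((+) t ` S) = dirspace S"
proof -
  have "{x - y |x y. x \<in> (+) t ` S \<and> y \<in> (+) t ` S} = {x - y |x y. x \<in> S \<and> y \<in> S}"
  proof (intro set_eqI iffI; clarify)
    fix a b assume "a \<in> S" "b \<in> S"
    then show "\<exists>x y. (t + a) - (t + b) = x - y \<and> x \<in> S \<and> y \<in> S" by auto
  next
    fix a b assume "a \<in> S" "b \<in> S"
    then show "\<exists>x y. a - b = x - y \<and> x \<in> (+) t ` S \<and> y \<in> (+) t ` S"
      by (intro exI[of _ "t + a"] exI[of _ "t + b"]) auto
  qed
  then show ?thesis unfolding dirspace_def by simp
qed

lemma aff_dim_eq_dim_dirspace:
  fixes S :: "'a::euclidean_space set"
  assumes "S \<noteq> {}"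
  shows "aff_dim S = int (dim (dirspace S))"
proof -
  obtain a where a: "a \<in> S" using assms by blast
  have "span ((\<lambda>x. x - a) ` S) = dirspace S"
  proof
    show "span ((\<lambda>x. x - a) ` S) \<subseteq> dirspace S"
      unfolding dirspace_def using a by (intro span_mono) blast
    show "dirspace S \<subseteq> span ((\<lambda>x. x - a) ` S)"
      unfolding dirspace_def
    proof (rule span_minimal[OF _ subspace_span], clarify)
      fix x y assume "x \<in> S" "y \<in> S"
      then have "(x - a) - (y - a) \<in> span ((\<lambda>x. x - a) ` S)"
        by (intro span_diff span_base) auto
      then show "x - y \<in> span ((\<lambda>x. x - a) ` S)" by simp
    qed
  qed
  then show ?thesis
    using aff_dim_eq_dim_subtract[OF hull_inc[OF a]] by (metis dim_span)
qed

lemma dirspace_max_face_zonotope_of_subset: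
  "dirspace (max_face (zonotope_of z vs) c) \<subseteq> orth_span vs c"
  unfolding dirspace_def
proof (rule span_minimal[OF _ subspace_orth_span], clarify)
  fix x y assume "x \<in> max_face (zonotope_of z vs) c" "y \<in> max_face (zonotope_of z vs) c"
  then obtain t s where t: "face_params vs c t" "x = z + (\<Sum>i<length vs. t i *\<^sub>R vs!i)"
    and s: "face_params vs c s" "y = z + (\<Sum>i<length vs. s i *\<^sub>R vs!i)"
    unfolding max_face_zonotope_of by blast
  have "x - y = (\<Sum>i<length vs. (t i - s i) *\<^sub>R vs!i)"
    unfolding t(2) s(2) by (simp add: sum_subtractf scaleR_diff_left)
  also have "\<dots> \<in> orth_span vs c"
  proof (rule subspace_sum[OF subspace_orth_span])
    fix i assume "i \<in> {..<length vs}"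
    then have i: "i < length vs" by simp
    show "(t i - s i) *\<^sub>R vs!i \<in> orth_span vs c"
    proof (cases "c \<bullet> vs!i = 0")
      case True
      then have "vs!i \<in> orth_span vs c" using mem_orth_span_iff[OF nth_mem[OF i]] by simp
      then show ?thesis by (simp add: orth_span_def span_scale)
    next
      case False
      then have "t i = s i"
        using face_params_forced[OF t(1) i False] face_params_forced[OF s(1) i False] by simp
      then show ?thesis by (simp add: orth_span_def span_zero)
    qed
  qed
  finally show "x - y \<in> orth_span vs c" .
qed

lemma orth_span_subset_dirspace_max_face_zonotope_of:
  "orth_span vs c \<subseteq> dirspace (max_face (zonotope_of z vs) c)"
  unfolding orth_span_def dirspace_def
proof (rule span_mono, clarify)
  fix v assume v: "v \<in> set vs" "c \<bullet> v = 0"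
  then obtain j where j: "j < length vs" "v = vs!j" by (auto simp: in_set_conv_nth)
  define t1 where "t1 = (vertex_params vs c)(j := 1)"
  define t0 where "t0 = (vertex_params vs c)(j := 0)"
  have "face_params vs c t1" "face_params vs c t0"
    using v j unfolding t1_def t0_def face_params_def vertex_params_def by auto
  then have "z + (\<Sum>i<length vs. t1 i *\<^sub>R vs!i) \<in> max_face (zonotope_of z vs) c"
      "z + (\<Sum>i<length vs. t0 i *\<^sub>R vs!i) \<in> max_face (zonotope_of z vs) c"
    unfolding max_face_zonotope_of by blast+
  moreover have "v = (z + (\<Sum>i<length vs. t1 i *\<^sub>R vs!i)) - (z + (\<Sum>i<length vs. t0 i *\<^sub>R vs!i))"
  proof -
    have "(\<Sum>i<length vs. t1 i *\<^sub>R vs!i) - (\<Sum>i<length vs. t0 i *\<^sub>R vs!i)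
        = (\<Sum>i<length vs. if i = j then vs!i else 0)"
      unfolding sum_subtractf[symmetric] by (rule sum.cong) (auto simp: t1_def t0_def)
    then show ?thesis using j by simp
  qed
  ultimately show "\<exists>x y. v = x - y \<and> x \<in> max_face (zonotope_of z vs) c
      \<and> y \<in> max_face (zonotope_of z vs) c"
    by blast
qed

lemma dirspace_max_face_zonotope_of: "dirspace (max_face (zonotope_of z vs) c) = orth_span vs c"
  using dirspace_max_face_zonotope_of_subset orth_span_subset_dirspace_max_face_zonotope_of by blast

lemma aff_dim_max_face_zonotope_of:
  "aff_dim (max_face (zonotope_of z vs) c) = int (dim (orth_span vs c))"
  using aff_dim_eq_dim_dirspace[OF max_face_zonotope_of_nonempty[of z vs c]]
  by (simp add: dirspace_max_face_zonotope_of)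

lemma dirspace_zonotope_of: "dirspace (zonotope_of z vs) = span (set vs)"
  using dirspace_max_face_zonotope_of[of z vs 0] by simp

lemma aff_dim_zonotope_of: "aff_dim (zonotope_of z vs) = int (dim (set vs))"
  using aff_dim_max_face_zonotope_of[of z vs 0] by simp

lemma max_face_zonotope_of_shift:
  assumes zeros: "\<forall>v\<in>set vs. c \<bullet> v = 0 \<longleftrightarrow> c' \<bullet> v = 0"
    and x: "x \<in> max_face (zonotope_of z vs) c"
  shows "x + (\<Sum>i<length vs. (vertex_params vs c' i - vertex_params vs c i) *\<^sub>R vs!i)
      \<in> max_face (zonotope_of z vs) c'"
proof -
  obtain t where t: "face_params vs c t" "x = z + (\<Sum>i<length vs. t i *\<^sub>R vs!i)"
    using x unfolding max_face_zonotope_of by blast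
  define t' where "t' i = t i + (vertex_params vs c' i - vertex_params vs c i)" for i
  have "face_params vs c' t'"
    unfolding face_params_def
  proof (intro allI impI)
    fix i assume i: "i < length vs"
    then have vi: "vs!i \<in> set vs" by simp
    show "0 \<le> t' i \<and> t' i \<le> 1 \<and> (0 < c' \<bullet> vs!i \<longrightarrow> t' i = 1) \<and> (c' \<bullet> vs!i < 0 \<longrightarrow> t' i = 0)"
    proof (cases "c \<bullet> vs!i = 0")
      case True
      then have "c' \<bullet> vs!i = 0" using zeros vi by blast
      then show ?thesis
        using True t(1) i unfolding t'_def vertex_params_def face_params_def by simp
    next
      case False
      then have "c' \<bullet> vs!i \<noteq> 0" using zeros vi by blast
      then show ?thesis
        using face_params_forced[OF t(1) i False] unfolding t'_def vertex_params_def by auto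
    qed
  qed
  moreover have "x + (\<Sum>i<length vs. (vertex_params vs c' i - vertex_params vs c i) *\<^sub>R vs!i)
      = z + (\<Sum>i<length vs. t' i *\<^sub>R vs!i)"
    unfolding t(2) t'_def by (simp add: scaleR_add_left sum.distrib)
  ultimately show ?thesis unfolding max_face_zonotope_of by blast
qed

lemma max_face_zonotope_of_translate:
  assumes "orth_span vs c = orth_span vs c'"
  obtains d where "max_face (zonotope_of z vs) c' = (+) d ` max_face (zonotope_of z vs) c"
proof -
  have zeros: "\<forall>v\<in>set vs. c \<bullet> v = 0 \<longleftrightarrow> c' \<bullet> v = 0"
    using assms mem_orth_span_iff by blast
  define d where "d = (\<Sum>i<length vs. (vertex_params vs c' i - vertex_params vs c i) *\<^sub>R vs!i)"
  have d': "(\<Sum>i<length vs. (vertex_params vs c i - vertex_params vs c' i) *\<^sub>R vs!i) = - d"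
    unfolding d_def sum_negf[symmetric] by (rule sum.cong) (simp_all add: scaleR_diff_left)
  have "max_face (zonotope_of z vs) c' = (+) d ` max_face (zonotope_of z vs) c"
  proof
    show "(+) d ` max_face (zonotope_of z vs) c \<subseteq> max_face (zonotope_of z vs) c'"
      using max_face_zonotope_of_shift[OF zeros] unfolding d_def by (auto simp: add.commute)
    show "max_face (zonotope_of z vs) c' \<subseteq> (+) d ` max_face (zonotope_of z vs) c"
    proof
      fix y assume "y \<in> max_face (zonotope_of z vs) c'"
      then have "y + - d \<in> max_face (zonotope_of z vs) c"
        using max_face_zonotope_of_shift[of vs c' c] zeros d' by auto
      then show "y \<in> (+) d ` max_face (zonotope_of z vs) c"
        by (rule rev_image_eqI) simp
    qed
  qed
  then show ?thesis by (rule that)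
qed

lemma max_face_zonotope_of_mono:
  assumes "\<forall>v\<in>set vs. (0 < n \<bullet> v \<longrightarrow> 0 < c \<bullet> v) \<and> (n \<bullet> v < 0 \<longrightarrow> c \<bullet> v < 0)"
  shows "max_face (zonotope_of z vs) c \<subseteq> max_face (zonotope_of z vs) n"
proof -
  have "face_params vs n t" if "face_params vs c t" for t
    using that assms nth_mem unfolding face_params_def by metis
  then show ?thesis unfolding max_face_zonotope_of by blast
qed

lemma orth_span_eq_span_singleton:
  assumes "h \<in> set vs" "c \<bullet> h = 0" "\<forall>v\<in>set vs. v \<notin> span {h} \<longrightarrow> c \<bullet> v \<noteq> 0"
  shows "orth_span vs c = span {h}"
proof
  show "orth_span vs c \<subseteq> span {h}"
    unfolding orth_span_def using assms by (intro span_minimal) auto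
  show "span {h} \<subseteq> orth_span vs c"
    unfolding orth_span_def using assms by (intro span_mono) auto
qed

lemma edge_of_zonotope_of_dirspace:
  fixes E :: "'a::euclidean_space set"
  assumes "E edge_of zonotope_of z vs"
  obtains g where "g \<in> set vs" "g \<noteq> 0" "dirspace E = span {g}"
proof -
  have "E \<noteq> {}" using assms unfolding edge_of_def by auto
  then obtain c where c: "E = max_face (zonotope_of z vs) c"
    using face_of_polyhedron_eq_max_face[OF polytope_imp_polyhedron[OF polytope_zonotope_of]] assms
    unfolding edge_of_def by blast
  then have dim1: "dim (orth_span vs c) = 1"
    using assms unfolding edge_of_def by (simp add: aff_dim_max_face_zonotope_of)
  obtain g where g: "g \<in> set vs" "c \<bullet> g = 0" "g \<noteq> 0"
  proof (rule ccontr)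
    assume "\<not> thesis"
    with that have "{v \<in> set vs. c \<bullet> v = 0} \<subseteq> {0}" by blast
    then have "dim (orth_span vs c) = 0"
      unfolding orth_span_def by simp
    with dim1 show False by simp
  qed
  have sub: "span {g} \<subseteq> orth_span vs c"
    unfolding orth_span_def using g by (intro span_mono) auto
  have "span {g} = orth_span vs c"
    using subspace_dim_equal[OF subspace_span subspace_orth_span sub] dim1 g(3) by simp
  then show ?thesis
    using that g c by (simp add: dirspace_max_face_zonotope_of)
qed

section \<open>Generic normals and planes\<close>

lemma exists_nonorthogonal_to_finite:
  fixes A :: "'a::real_inner set"
  assumes "finite A" "subspace S" "\<forall>a\<in>A. \<exists>s\<in>S. s \<bullet> a \<noteq> 0"
  shows "\<exists>d\<in>S. \<forall>a\<in>A. d \<bullet> a \<noteq> 0"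
  using assms
proof (induction A rule: finite_induct)
  case empty
  then show ?case using subspace_0 by blast
next
  case (insert a A)
  then obtain d where d: "d \<in> S" "\<forall>b\<in>A. d \<bullet> b \<noteq> 0" by blast
  obtain s where s: "s \<in> S" "s \<bullet> a \<noteq> 0" using insert by blast
  have "finite ((\<lambda>b. - (d \<bullet> b) / (s \<bullet> b)) ` insert a A)" using insert by simp
  then obtain u where u: "u \<notin> (\<lambda>b. - (d \<bullet> b) / (s \<bullet> b)) ` insert a A"
    using ex_new_if_finite[OF infinite_UNIV_char_0] by blast
  have "(d + u *\<^sub>R s) \<bullet> b \<noteq> 0" if b: "b \<in> insert a A" for b
  proof (cases "s \<bullet> b = 0")
    case True
    then have "d \<bullet> b \<noteq> 0" using d s b by auto
    then show ?thesis using True by (simp add: inner_add_left)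
  next
    case False
    have "u \<noteq> - (d \<bullet> b) / (s \<bullet> b)" using u b by blast
    then have "u * (s \<bullet> b) \<noteq> - (d \<bullet> b)" using False by (simp add: field_simps)
    then show ?thesis by (simp add: inner_add_left algebra_simps)
  qed
  moreover have "d + u *\<^sub>R s \<in> S"
    using d s insert.prems(1) by (simp add: subspace_add subspace_scale)
  ultimately show ?case by blast
qed

lemma exists_nonorthogonal_in_hyperplane:
  fixes a h :: "'a::real_inner"
  assumes "a \<notin> span {h}"
  shows "\<exists>s. h \<bullet> s = 0 \<and> s \<bullet> a \<noteq> 0"
proof -
  \<comment> \<open>for \<open>h = 0\<close> the division by zero gives \<open>s = a\<close>\<close>
  define s where "s = a - ((a \<bullet> h) / (h \<bullet> h)) *\<^sub>R h"
  have sh: "h \<bullet> s = 0"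
    unfolding s_def by (cases "h = 0") (simp_all add: inner_diff_right inner_commute)
  have "s \<noteq> 0"
    using assms unfolding s_def by (metis eq_iff_diff_eq_0 span_base span_scale singletonI)
  moreover have "s \<bullet> a = s \<bullet> s"
    using sh unfolding s_def by (simp add: inner_diff_right inner_commute)
  ultimately show ?thesis using sh by auto
qed

lemma exists_generic_perturbation:
  fixes h n :: "'a::real_inner"
  assumes "finite V" "n \<bullet> h = 0"
  shows "\<exists>c. c \<bullet> h = 0 \<and> (\<forall>v\<in>V. (0 < n \<bullet> v \<longrightarrow> 0 < c \<bullet> v) \<and> (n \<bullet> v < 0 \<longrightarrow> c \<bullet> v < 0)
      \<and> (v \<notin> span {h} \<longrightarrow> c \<bullet> v \<noteq> 0))"
proof -
  have "\<forall>a\<in>{v\<in>V. v \<notin> span {h}}. \<exists>s\<in>{x. h \<bullet> x = 0}. s \<bullet> a \<noteq> 0"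
    using exists_nonorthogonal_in_hyperplane by blast
  moreover have "finite {v\<in>V. v \<notin> span {h}}" using assms(1) by simp
  ultimately obtain d where "d \<in> {x. h \<bullet> x = 0}" "\<forall>a\<in>{v\<in>V. v \<notin> span {h}}. d \<bullet> a \<noteq> 0"
    using exists_nonorthogonal_to_finite[OF _ subspace_hyperplane] by blast
  then have d: "h \<bullet> d = 0" "\<forall>v\<in>V. v \<notin> span {h} \<longrightarrow> d \<bullet> v \<noteq> 0" by auto
  define keeps_sign where "keeps_sign e v \<longleftrightarrow>
    (0 < n \<bullet> v \<longrightarrow> 0 < n \<bullet> v + e * (d \<bullet> v)) \<and> (n \<bullet> v < 0 \<longrightarrow> n \<bullet> v + e * (d \<bullet> v) < 0)"
    for e v
  have ev: "eventually (\<lambda>e. keeps_sign e v) (at_right (0::real))" for v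
  proof -
    have lim: "((\<lambda>e. n \<bullet> v + e * (d \<bullet> v)) \<longlongrightarrow> n \<bullet> v) (at_right (0::real))"
      by (auto intro!: tendsto_eq_intros)
    show ?thesis
      unfolding keeps_sign_def
      using order_tendstoD(1)[OF lim, of 0] order_tendstoD(2)[OF lim, of 0]
      by (cases "0 < n \<bullet> v"; cases "n \<bullet> v < 0") (auto elim: eventually_mono)
  qed
  have "eventually (\<lambda>e. \<forall>v\<in>V. keeps_sign e v) (at_right (0::real))"
    using eventually_ball_finite[OF assms(1)] ev by blast
  then have "eventually (\<lambda>e. 0 < e \<and> (\<forall>v\<in>V. keeps_sign e v)) (at_right (0::real))"
    by (rule eventually_conj[OF eventually_at_right_less])
  then obtain e where e: "0 < e" "\<forall>v\<in>V. keeps_sign e v"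
    using eventually_happens' trivial_limit_at_right_real by blast
  define c where "c = n + e *\<^sub>R d"
  have cv: "c \<bullet> v = n \<bullet> v + e * (d \<bullet> v)" for v
    unfolding c_def by (simp add: inner_add_left)
  have "c \<bullet> h = 0" using cv[of h] assms(2) d(1) by (simp add: inner_commute)
  moreover have "v \<notin> span {h} \<longrightarrow> c \<bullet> v \<noteq> 0" if "v \<in> V" for v
    using that e d(2) cv[of v] unfolding keeps_sign_def
    by (cases "n \<bullet> v" "0::real" rule: linorder_cases) auto
  ultimately show ?thesis
    using e cv unfolding keeps_sign_def by (intro exI[of _ c]) auto
qed

lemma not_in_span_singleton_sym:
  fixes x y :: "'a::real_vector"
  assumes "x \<noteq> 0" "y \<notin> span {x}"
  shows "x \<notin> span {y}"
proof
  assume "x \<in> span {y}"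
  then obtain k where k: "x = k *\<^sub>R y" by (auto simp: span_singleton)
  with assms have "y = (1 / k) *\<^sub>R x" by auto
  then show False using assms by (metis span_base span_scale singletonI)
qed

lemma dim_span_pair:
  fixes h v :: "'a::euclidean_space"
  assumes "h \<noteq> 0" "v \<notin> span {h}"
  shows "dim (span {h, v}) = 2"
proof -
  have "dim (insert v {h}) = 2" using assms by (simp add: dim_insert)
  then show ?thesis by (simp add: insert_commute)
qed

lemma dim_span_pair_le: "dim (span {x, y :: 'a::euclidean_space}) \<le> 2"
proof -
  have "dim {x, y} \<le> card {x, y}" by (rule dim_le_card) (auto intro: span_base)
  also have "\<dots> \<le> 2" by (simp add: card_insert_le_m1)
  finally show ?thesis by simp
qed

lemma subspace_eq_span_pair:
  fixes x y :: "'a::euclidean_space"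
  assumes "subspace m" "dim m \<le> 2" "x \<in> m" "y \<in> m" "x \<noteq> 0" "y \<notin> span {x}"
  shows "m = span {x, y}"
proof -
  have "span {x, y} \<subseteq> m" using assms by (intro span_minimal) auto
  moreover have "dim (span {x, y}) = 2" using dim_span_pair assms by blast
  ultimately show ?thesis
    using subspace_dim_equal[of "span {x, y}" m] assms by simp
qed

lemma subspace_eq_hyperplane:
  fixes c :: "'a::euclidean_space"
  assumes "c \<noteq> 0" "subspace p" "dim p = DIM('a) - 1" "p \<subseteq> {x. c \<bullet> x = 0}"
  shows "p = {x. c \<bullet> x = 0}"
  using subspace_dim_equal[OF assms(2) subspace_hyperplane assms(4)] assms
    dim_hyperplane[OF assms(1)]
  by simp

lemma hyperplane_subset_imp_scaleR:
  fixes c c' :: "'a::real_inner"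
  assumes "c \<noteq> 0" "c' \<noteq> 0" "{x. c \<bullet> x = 0} \<subseteq> {x. c' \<bullet> x = 0}"
  obtains m where "m \<noteq> 0" "c' = m *\<^sub>R c"
proof -
  define k where "k = (c' \<bullet> c) / (c \<bullet> c)"
  define d where "d = c' - k *\<^sub>R c"
  have "c \<bullet> d = 0"
    using assms(1) unfolding d_def k_def by (simp add: inner_diff_right inner_commute)
  then have "c' \<bullet> d = 0" using assms(3) by blast
  then have "d \<bullet> d = 0"
    using \<open>c \<bullet> d = 0\<close> unfolding d_def by (simp add: inner_diff_left inner_commute)
  then have "c' = k *\<^sub>R c" unfolding d_def by simp
  moreover have "k \<noteq> 0" using assms calculation by auto
  ultimately show ?thesis using that by blast
qed

section \<open>Belts of a three-dimensional zonotope\<close>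

lemma finite_belt:
  fixes P :: "'a::euclidean_space set"
  assumes "polytope P"
  shows "finite (belt P E)"
proof (rule finite_subset[OF _ finite_polytope_faces[OF assms]])
  show "belt P E \<subseteq> {F. F face_of P}"
    unfolding belt_def facet_of_def by blast
qed

definition planes_through :: "'a::real_vector set \<Rightarrow> 'a \<Rightarrow> 'a set set" where
  "planes_through V h = (\<lambda>v. span {h, v}) ` {v\<in>V. v \<notin> span {h}}"

lemma finite_planes_through: "finite V \<Longrightarrow> finite (planes_through V h)"
  unfolding planes_through_def by simp

lemma span_pair_in_planes_through:
  "W \<in> V \<Longrightarrow> W \<notin> span {A} \<Longrightarrow> span {A, W} \<in> planes_through V A"
  unfolding planes_through_def by blast

lemma planes_through_eq_orth_span:
  fixes h :: "real^3"
  assumes "p \<in> planes_through (set vs) h" "h \<in> set vs" "h \<noteq> 0"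
  obtains n where "n \<bullet> h = 0" "orth_span vs n = p" "dim p = 2"
proof -
  obtain v where v: "v \<in> set vs" "v \<notin> span {h}" "p = span {h, v}"
    using assms(1) unfolding planes_through_def by blast
  have dim2: "dim p = 2" using dim_span_pair[OF assms(3) v(2)] v(3) by simp
  then obtain n where n: "n \<noteq> 0" "span p = {x. n \<bullet> x = 0}"
    using lowdim_eq_hyperplane[of p] by auto
  then have p: "p = {x. n \<bullet> x = 0}" by (metis v(3) span_span)
  have "h \<in> p" "v \<in> p" unfolding v(3) by (auto intro: span_base)
  then have hv: "n \<bullet> h = 0" "n \<bullet> v = 0" using p by auto
  then have "p \<subseteq> orth_span vs n"
    unfolding v(3) orth_span_def using v(1) assms(2) by (intro span_mono) auto
  moreover have "orth_span vs n \<subseteq> p"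
    using orth_span_subset_hyperplane p by blast
  ultimately show ?thesis using that hv(1) dim2 by blast
qed

context
  fixes z :: "real^3" and vs :: "(real^3) list"
  assumes aff_dim_zonotope_3: "aff_dim (zonotope_of z vs) = 3"
begin

lemma facet_of_zonotope_of_eq_max_face:
  assumes "F facet_of zonotope_of z vs"
  obtains c where "c \<noteq> 0" "F = max_face (zonotope_of z vs) c" "dim (orth_span vs c) = 2"
proof -
  obtain c where c: "F = max_face (zonotope_of z vs) c"
    using face_of_polyhedron_eq_max_face[OF polytope_imp_polyhedron[OF polytope_zonotope_of]] assms
    unfolding facet_of_def by blast
  have aff2: "aff_dim F = 2" using assms aff_dim_zonotope_3 unfolding facet_of_def by simp
  then have "dim (orth_span vs c) = 2" using c by (simp add: aff_dim_max_face_zonotope_of)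
  moreover have "c \<noteq> 0" using aff2 c aff_dim_zonotope_3 by auto
  ultimately show ?thesis using that c by blast
qed

lemma max_face_zonotope_of_neq_uminus:
  assumes "dim (orth_span vs n) = 2"
  shows "max_face (zonotope_of z vs) n \<noteq> max_face (zonotope_of z vs) (- n)"
proof
  assume eq: "max_face (zonotope_of z vs) n = max_face (zonotope_of z vs) (- n)"
  obtain x where x: "x \<in> max_face (zonotope_of z vs) n"
    using max_face_zonotope_of_nonempty by blast
  have "zonotope_of z vs \<subseteq> max_face (zonotope_of z vs) n"
  proof
    fix y assume y: "y \<in> zonotope_of z vs"
    have "n \<bullet> y \<le> n \<bullet> x" "(- n) \<bullet> y \<le> (- n) \<bullet> x"
      using x eq y unfolding max_face_def by blast+
    then have "n \<bullet> y = n \<bullet> x" by simp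
    then show "y \<in> max_face (zonotope_of z vs) n"
      using x y unfolding max_face_def by simp
  qed
  then have "max_face (zonotope_of z vs) n = zonotope_of z vs"
    using max_face_subset by blast
  then show False
    using aff_dim_max_face_zonotope_of[of z vs n] assms aff_dim_zonotope_3 by simp
qed

lemma facets_with_dirspace_subset:
  obtains c where "{F. F facet_of zonotope_of z vs \<and> dirspace F = p}
    \<subseteq> {max_face (zonotope_of z vs) c, max_face (zonotope_of z vs) (- c)}"
proof (cases "\<exists>F. F facet_of zonotope_of z vs \<and> dirspace F = p")
  case True
  then obtain F0 where F0: "F0 facet_of zonotope_of z vs" "dirspace F0 = p" by blast
  obtain c0 where c0: "c0 \<noteq> 0" "F0 = max_face (zonotope_of z vs) c0" "dim (orth_span vs c0) = 2"
    using F0(1) by (rule facet_of_zonotope_of_eq_max_face)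
  have "orth_span vs c0 = {x. c0 \<bullet> x = 0}"
    using subspace_eq_hyperplane[OF c0(1) subspace_orth_span _ orth_span_subset_hyperplane] c0(3)
    by simp
  then have p0: "p = {x. c0 \<bullet> x = 0}"
    using F0(2) c0(2) by (simp add: dirspace_max_face_zonotope_of)
  have "F \<in> {max_face (zonotope_of z vs) c0, max_face (zonotope_of z vs) (- c0)}"
    if F: "F facet_of zonotope_of z vs" "dirspace F = p" for F
  proof -
    obtain c where c: "c \<noteq> 0" "F = max_face (zonotope_of z vs) c" "dim (orth_span vs c) = 2"
      using F(1) by (rule facet_of_zonotope_of_eq_max_face)
    have "orth_span vs c = {x. c \<bullet> x = 0}"
      using subspace_eq_hyperplane[OF c(1) subspace_orth_span _ orth_span_subset_hyperplane] c(3)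
      by simp
    then have "p = {x. c \<bullet> x = 0}"
      using F(2) c(2) by (simp add: dirspace_max_face_zonotope_of)
    then obtain m where m: "m \<noteq> 0" "c = m *\<^sub>R c0"
      using hyperplane_subset_imp_scaleR[OF c0(1) c(1)] p0 by blast
    show ?thesis
    proof (cases "0 < m")
      case True
      then show ?thesis by (simp add: c(2) m(2) max_face_scaleR[OF True])
    next
      case False
      have "max_face (zonotope_of z vs) ((- m) *\<^sub>R (- c0)) = max_face (zonotope_of z vs) (- c0)"
        using False m(1) by (intro max_face_scaleR) simp
      then show ?thesis using c(2) m(2) by simp
    qed
  qed
  then have "{F. F facet_of zonotope_of z vs \<and> dirspace F = p}
      \<subseteq> {max_face (zonotope_of z vs) c0, max_face (zonotope_of z vs) (- c0)}"
    by blast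
  then show ?thesis by (rule that)
next
  case False
  then show ?thesis by (intro that[of 0]) blast
qed

lemma card_facets_with_dirspace_le:
  "finite {F. F facet_of zonotope_of z vs \<and> dirspace F = p}"
  "card {F. F facet_of zonotope_of z vs \<and> dirspace F = p} \<le> 2"
proof -
  obtain c where c: "{F. F facet_of zonotope_of z vs \<and> dirspace F = p}
      \<subseteq> {max_face (zonotope_of z vs) c, max_face (zonotope_of z vs) (- c)}"
    by (rule facets_with_dirspace_subset)
  then show "finite {F. F facet_of zonotope_of z vs \<and> dirspace F = p}"
    by (rule finite_subset) simp
  have "card {max_face (zonotope_of z vs) c, max_face (zonotope_of z vs) (- c)} \<le> 2"
    by (simp add: card_insert_le_m1)
  then show "card {F. F facet_of zonotope_of z vs \<and> dirspace F = p} \<le> 2"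
    using card_mono[OF _ c] by simp
qed

lemma dirspace_in_planes_through_if_in_belt:
  assumes "F \<in> belt (zonotope_of z vs) E" "g \<noteq> 0" "dirspace E = span {g}"
  shows "dirspace F \<in> planes_through (set vs) g"
proof -
  obtain t where F: "F facet_of zonotope_of z vs" "((+) t ` E) edge_of F"
    using assms(1) unfolding belt_def by auto
  obtain c where c: "c \<noteq> 0" "F = max_face (zonotope_of z vs) c" "dim (orth_span vs c) = 2"
    using F(1) by (rule facet_of_zonotope_of_eq_max_face)
  have "dirspace ((+) t ` E) \<subseteq> dirspace F"
    using F(2) edge_of_imp_subset dirspace_mono by blast
  then have g: "g \<in> orth_span vs c"
    using assms(3) c(2) by (auto simp: dirspace_max_face_zonotope_of intro: span_base)
  obtain v where v: "v \<in> set vs" "c \<bullet> v = 0" "v \<notin> span {g}"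
  proof (rule ccontr)
    assume "\<not> thesis"
    with that have "orth_span vs c \<subseteq> span {g}"
      unfolding orth_span_def by (intro span_minimal) auto
    then have "dim (orth_span vs c) \<le> dim (span {g})" by (rule dim_subset)
    with c(3) assms(2) show False by simp
  qed
  have "orth_span vs c = span {g, v}"
    using subspace_eq_span_pair[OF subspace_orth_span _ g _ assms(2) v(3)] c(3) v(1,2)
    by (simp add: mem_orth_span_iff)
  then show ?thesis
    using c(2) v unfolding planes_through_def by (auto simp: dirspace_max_face_zonotope_of)
qed

lemma card_belt_le:
  assumes "g \<noteq> 0" "dirspace E = span {g}"
  shows "card (belt (zonotope_of z vs) E) \<le> 2 * card (planes_through (set vs) g)"
proof -
  let ?U = "\<Union>p\<in>planes_through (set vs) g. {F. F facet_of zonotope_of z vs \<and> dirspace F = p}"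
  have "belt (zonotope_of z vs) E \<subseteq> ?U"
    using dirspace_in_planes_through_if_in_belt[OF _ assms] unfolding belt_def by blast
  moreover have "finite ?U"
    using finite_planes_through card_facets_with_dirspace_le(1) by blast
  moreover have "card ?U \<le> 2 * card (planes_through (set vs) g)"
  proof -
    have "card ?U \<le> (\<Sum>p\<in>planes_through (set vs) g.
        card {F. F facet_of zonotope_of z vs \<and> dirspace F = p})"
      by (rule card_UN_le[OF finite_planes_through]) simp
    also have "\<dots> \<le> (\<Sum>p\<in>planes_through (set vs) g. 2)"
      by (rule sum_mono) (rule card_facets_with_dirspace_le(2))
    finally show ?thesis by simp
  qed
  ultimately show ?thesis
    using card_mono le_trans by blast
qed

lemma max_face_in_belt:
  assumes h: "h \<in> set vs" "h \<noteq> 0" and c0: "orth_span vs c0 = span {h}"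
    and s: "s \<bullet> h = 0" "dim (orth_span vs s) = 2"
  shows "max_face (zonotope_of z vs) s \<in> belt (zonotope_of z vs) (max_face (zonotope_of z vs) c0)"
proof -
  have convex: "convex (zonotope_of z vs)"
    by (rule polytope_imp_convex[OF polytope_zonotope_of])
  have facet: "max_face (zonotope_of z vs) s facet_of zonotope_of z vs"
    unfolding facet_of_def
    using max_face_face_of[OF convex] max_face_zonotope_of_nonempty s(2) aff_dim_zonotope_3
    by (simp add: aff_dim_max_face_zonotope_of)
  obtain c where c: "c \<bullet> h = 0" "\<forall>v\<in>set vs. (0 < s \<bullet> v \<longrightarrow> 0 < c \<bullet> v) \<and> (s \<bullet> v < 0 \<longrightarrow> c \<bullet> v < 0)
      \<and> (v \<notin> span {h} \<longrightarrow> c \<bullet> v \<noteq> 0)"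
    using exists_generic_perturbation[of "set vs" s h] s(1) by (auto simp: inner_commute)
  have orth_c: "orth_span vs c = span {h}"
    using orth_span_eq_span_singleton[OF h(1) c(1)] c(2) by blast
  have sub: "max_face (zonotope_of z vs) c \<subseteq> max_face (zonotope_of z vs) s"
    using max_face_zonotope_of_mono c(2) by blast
  have "max_face (zonotope_of z vs) c face_of max_face (zonotope_of z vs) s"
    using face_of_subset[OF max_face_face_of[OF convex] sub max_face_subset] .
  moreover have "aff_dim (max_face (zonotope_of z vs) c) = 1"
    using h(2) by (simp add: aff_dim_max_face_zonotope_of orth_c)
  ultimately have edge: "max_face (zonotope_of z vs) c edge_of max_face (zonotope_of z vs) s"
    unfolding edge_of_def by blast
  obtain d where "max_face (zonotope_of z vs) c = (+) d ` max_face (zonotope_of z vs) c0"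
    using max_face_zonotope_of_translate c0 orth_c by metis
  with edge facet show ?thesis
    unfolding belt_def by auto
qed

lemma card_belt_ge:
  assumes h: "h \<in> set vs" "h \<noteq> 0" and c0: "orth_span vs c0 = span {h}"
  shows "2 * card (planes_through (set vs) h)
    \<le> card (belt (zonotope_of z vs) (max_face (zonotope_of z vs) c0))"
proof -
  have "\<exists>n. n \<bullet> h = 0 \<and> orth_span vs n = p \<and> dim p = 2"
    if "p \<in> planes_through (set vs) h" for p
    using planes_through_eq_orth_span[OF that h] by blast
  then obtain N where N: "\<And>p. p \<in> planes_through (set vs) h \<Longrightarrow>
      N p \<bullet> h = 0 \<and> orth_span vs (N p) = p \<and> dim p = 2"
    by metis
  let ?S1 = "(\<lambda>p. max_face (zonotope_of z vs) (N p)) ` planes_through (set vs) h"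
  let ?S2 = "(\<lambda>p. max_face (zonotope_of z vs) (- N p)) ` planes_through (set vs) h"
  have dir1: "dirspace (max_face (zonotope_of z vs) (N p)) = p"
    and dir2: "dirspace (max_face (zonotope_of z vs) (- N p)) = p"
    if "p \<in> planes_through (set vs) h" for p
    using N[OF that] by (simp_all add: dirspace_max_face_zonotope_of)
  have card1: "card ?S1 = card (planes_through (set vs) h)"
    by (rule card_image, rule inj_onI) (metis dir1)
  have card2: "card ?S2 = card (planes_through (set vs) h)"
    by (rule card_image, rule inj_onI) (metis dir2)
  have "?S1 \<inter> ?S2 = {}"
  proof (rule ccontr)
    assume "?S1 \<inter> ?S2 \<noteq> {}"
    then obtain p q where pq: "p \<in> planes_through (set vs) h" "q \<in> planes_through (set vs) h"
      "max_face (zonotope_of z vs) (N p) = max_face (zonotope_of z vs) (- N q)"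
      by blast
    then have "p = q" using dir1[OF pq(1)] dir2[OF pq(2)] by simp
    then show False
      using max_face_zonotope_of_neq_uminus[of "N p"] N[OF pq(1)] pq(3) by simp
  qed
  moreover have "finite (planes_through (set vs) h)"
    by (simp add: finite_planes_through)
  ultimately have "card (?S1 \<union> ?S2) = card ?S1 + card ?S2"
    by (intro card_Un_disjoint) auto
  then have "card (?S1 \<union> ?S2) = 2 * card (planes_through (set vs) h)"
    using card1 card2 by simp
  moreover have "?S1 \<union> ?S2 \<subseteq> belt (zonotope_of z vs) (max_face (zonotope_of z vs) c0)"
    using max_face_in_belt[OF h c0] N by auto
  ultimately show ?thesis
    using card_mono[OF finite_belt[OF polytope_zonotope_of]] by metis
qed

lemma exists_edge_card_belt_ge:
  assumes h: "h \<in> set vs" "h \<noteq> 0"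
  obtains M where "M edge_of zonotope_of z vs" "dirspace M = span {h}"
    "2 * card (planes_through (set vs) h) \<le> card (belt (zonotope_of z vs) M)"
proof -
  obtain c0 where c0: "c0 \<bullet> h = 0" "\<forall>v\<in>set vs. v \<notin> span {h} \<longrightarrow> c0 \<bullet> v \<noteq> 0"
    using exists_generic_perturbation[of "set vs" 0 h] by auto
  have orth_c0: "orth_span vs c0 = span {h}"
    by (rule orth_span_eq_span_singleton[OF h(1) c0])
  have "max_face (zonotope_of z vs) c0 edge_of zonotope_of z vs"
    unfolding edge_of_def using h(2)
    by (simp add: max_face_face_of polytope_imp_convex polytope_zonotope_of
        aff_dim_max_face_zonotope_of orth_c0)
  moreover have "dirspace (max_face (zonotope_of z vs) c0) = span {h}"
    by (simp add: dirspace_max_face_zonotope_of orth_c0)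
  ultimately show ?thesis
    using that card_belt_ge[OF h orth_c0] by blast
qed

end

section \<open>Planes through generator directions\<close>

lemma four_le_card:
  "finite S \<Longrightarrow> distinct [a, b, c, d] \<Longrightarrow> {a, b, c, d} \<subseteq> S \<Longrightarrow> 4 \<le> card S"
  using card_mono[of S "set [a, b, c, d]"] distinct_card[of "[a, b, c, d]"] by simp

lemma obtain_five_distinct:
  assumes "finite S" "5 \<le> card S"
  obtains a b c d e where "{a, b, c, d, e} \<subseteq> S" "distinct [a, b, c, d, e]"
proof -
  obtain T where T: "T \<subseteq> S" "card T = 5"
    using obtain_subset_with_card_n[OF assms(2)] by metis
  then have "card T = Suc (Suc (Suc (Suc (Suc 0))))" by simp
  then have "\<exists>a b c d e. T = {a, b, c, d, e} \<and> distinct [a, b, c, d, e]"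
    unfolding card_Suc_eq by (elim exE conjE) (simp, blast)
  with T(1) show ?thesis using that by blast
qed

lemma span_pair_eq_if_mem:
  fixes x y w :: "'a::euclidean_space"
  assumes "x \<noteq> 0" "y \<notin> span {x}" "y \<in> span {x, w}"
  shows "span {x, y} = span {x, w}"
  using subspace_eq_span_pair[OF subspace_span dim_span_pair_le _ assms(3,1,2)]
  by (simp add: span_base)

lemma in_span_if_span_pair_eq:
  fixes Y B B' :: "'a::real_vector"
  assumes "subspace m" "Y \<notin> m" "B \<in> m" "B' \<in> m" "span {Y, B} = span {Y, B'}"
  shows "B' \<in> span {B}"
proof -
  have "B' \<in> span {Y, B}" using assms(5) by (auto intro: span_base)
  then obtain k where k: "B' - k *\<^sub>R Y \<in> span {B}"
    by (auto simp: span_breakdown_eq)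
  have "span {B} \<subseteq> m" using assms(1,3) by (intro span_minimal) auto
  then have "B' - k *\<^sub>R Y \<in> m" using k by blast
  then have "k *\<^sub>R Y \<in> m"
    using subspace_diff[OF assms(1) assms(4)] by fastforce
  then have "(1 / k) *\<^sub>R (k *\<^sub>R Y) \<in> m" by (rule subspace_scale[OF assms(1)])
  then have "k = 0" using assms(2) by (cases "k = 0") auto
  then show ?thesis using k by simp
qed

text \<open>For \<open>g \<noteq> 0\<close>: \<open>X, Y \<in> V\<close> and \<open>g, X, Y\<close> are linearly independent.\<close>

definition indep_triple :: "'a::real_vector set \<Rightarrow> 'a \<Rightarrow> 'a \<Rightarrow> 'a \<Rightarrow> bool" where
  "indep_triple V g X Y \<longleftrightarrow> X \<in> V \<and> Y \<in> V \<and> X \<notin> span {g} \<and> Y \<notin> span {g}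
    \<and> Y \<notin> span {g, X} \<and> X \<notin> span {g, Y}"

lemma indep_triple_sym: "indep_triple V g X Y \<Longrightarrow> indep_triple V g Y X"
  unfolding indep_triple_def by blast

lemma indep_triple_not_parallel:
  assumes "indep_triple V g X Y"
  shows "X \<noteq> 0" "Y \<notin> span {X}"
proof -
  show "X \<noteq> 0" using assms span_zero unfolding indep_triple_def by blast
  have "span {X} \<subseteq> span {g, X}" by (rule span_mono) auto
  then show "Y \<notin> span {X}" using assms unfolding indep_triple_def by blast
qed

lemma indep_triple_if_planes_differ:
  fixes g X Y :: "'a::euclidean_space"
  assumes "g \<noteq> 0" "X \<in> V" "Y \<in> V" "X \<notin> span {g}" "Y \<notin> span {g}" "span {g, X} \<noteq> span {g, Y}"
  shows "indep_triple V g X Y"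
  using span_pair_eq_if_mem[OF assms(1,4)] span_pair_eq_if_mem[OF assms(1,5)] assms
  unfolding indep_triple_def by metis

lemma span_pair_neq_if_not_mem:
  "X \<notin> span {g, A} \<Longrightarrow> span {A, g} \<noteq> span {A, X}"
  by (metis insert_commute insertI1 insertI2 span_base)

lemma four_le_card_planes_through_off_plane:
  fixes Y :: "'a::euclidean_space"
  assumes "finite V" "subspace m" "Y \<notin> m" "{B1, B2, B3, B4} \<subseteq> m"
    and "indep_triple V g B1 B2" "indep_triple V g B1 B3" "indep_triple V g B1 B4"
      "indep_triple V g B2 B3" "indep_triple V g B2 B4" "indep_triple V g B3 B4"
  shows "4 \<le> card (planes_through V Y)"
proof -
  have plane: "span {Y, B} \<in> planes_through V Y" if "B \<in> m" "indep_triple V g B B'" for B B'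
  proof -
    have "span {B} \<subseteq> m" using assms(2) that(1) by (intro span_minimal) auto
    then have "Y \<notin> span {B}" using assms(3) by blast
    then have "B \<notin> span {Y}"
      using not_in_span_singleton_sym indep_triple_not_parallel(1)[OF that(2)] by blast
    then show ?thesis
      using that(2) unfolding planes_through_def indep_triple_def by blast
  qed
  have distinct: "span {Y, B} \<noteq> span {Y, B'}" if "B \<in> m" "B' \<in> m" "indep_triple V g B B'" for B B'
    using in_span_if_span_pair_eq[OF assms(2,3) that(1,2)] indep_triple_not_parallel(2)[OF that(3)]
    by blast
  have B: "B1 \<in> m" "B2 \<in> m" "B3 \<in> m" "B4 \<in> m" using assms(4) by simp_all
  have sym: "indep_triple V g B2 B1" "indep_triple V g B3 B1" "indep_triple V g B4 B1"
    using assms(5-7) by (auto intro: indep_triple_sym)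
  have "distinct [span {Y, B1}, span {Y, B2}, span {Y, B3}, span {Y, B4}]"
    using distinct[OF B(1,2) assms(5)] distinct[OF B(1,3) assms(6)] distinct[OF B(1,4) assms(7)]
      distinct[OF B(2,3) assms(8)] distinct[OF B(2,4) assms(9)] distinct[OF B(3,4) assms(10)]
    by simp
  moreover have "{span {Y, B1}, span {Y, B2}, span {Y, B3}, span {Y, B4}} \<subseteq> planes_through V Y"
    using plane[OF B(1) assms(5)] plane[OF B(2) sym(1)] plane[OF B(3) sym(2)] plane[OF B(4) sym(3)]
    by simp
  ultimately show ?thesis
    by (rule four_le_card[OF finite_planes_through[OF assms(1)]])
qed

context
  fixes V :: "'a::euclidean_space set" and g :: 'a
  assumes finite_V: "finite V" and g_in_V: "g \<in> V" and g_nonzero: "g \<noteq> 0"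
    and few_planes: "\<forall>h\<in>V. h \<notin> span {g} \<longrightarrow> card (planes_through V h) \<le> 3"
begin

lemma not_four_planes_through:
  assumes "h \<in> V" "h \<notin> span {g}" "distinct [p1, p2, p3, p4]" "{p1, p2, p3, p4} \<subseteq> planes_through V h"
  shows False
proof -
  have "4 \<le> card (planes_through V h)"
    by (rule four_le_card[OF finite_planes_through[OF finite_V] assms(3,4)])
  moreover have "card (planes_through V h) \<le> 3" using few_planes assms(1,2) by blast
  ultimately show False by simp
qed

lemma span_g_in_planes_through:
  "A \<notin> span {g} \<Longrightarrow> span {A, g} \<in> planes_through V A"
  using span_pair_in_planes_through[OF g_in_V] not_in_span_singleton_sym[OF g_nonzero] by blast

lemma two_of_three_planes_eq:
  assumes "indep_triple V g A X" "indep_triple V g A Y" "indep_triple V g A Z"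
  shows "span {A, X} = span {A, Y} \<or> span {A, X} = span {A, Z} \<or> span {A, Y} = span {A, Z}"
proof (rule ccontr)
  assume ne: "\<not> ?thesis"
  have A: "A \<in> V" "A \<notin> span {g}" using assms(1) unfolding indep_triple_def by auto
  have V: "X \<in> V" "Y \<in> V" "Z \<in> V" "X \<notin> span {g, A}" "Y \<notin> span {g, A}" "Z \<notin> span {g, A}"
    using assms unfolding indep_triple_def by auto
  have "distinct [span {A, g}, span {A, X}, span {A, Y}, span {A, Z}]"
    using ne span_pair_neq_if_not_mem[OF V(4)] span_pair_neq_if_not_mem[OF V(5)]
      span_pair_neq_if_not_mem[OF V(6)] by simp
  moreover have "{span {A, g}, span {A, X}, span {A, Y}, span {A, Z}} \<subseteq> planes_through V A"
    using span_g_in_planes_through[OF A(2)]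
      span_pair_in_planes_through[OF V(1) indep_triple_not_parallel(2)[OF assms(1)]]
      span_pair_in_planes_through[OF V(2) indep_triple_not_parallel(2)[OF assms(2)]]
      span_pair_in_planes_through[OF V(3) indep_triple_not_parallel(2)[OF assms(3)]]
    by simp
  ultimately show False by (rule not_four_planes_through[OF A])
qed

lemma span_pair_eq_of_coplanar_triple:
  assumes AB: "indep_triple V g A B" and AD: "indep_triple V g A D" and AE: "indep_triple V g A E"
    and BD: "indep_triple V g B D" and BE: "indep_triple V g B E" and DE: "indep_triple V g D E"
    and ADE: "span {A, D} = span {A, E}"
  shows "span {A, B} = span {A, D}"
proof -
  have "B \<in> span {A, D}"
  proof (rule ccontr)
    assume B: "B \<notin> span {A, D}"
    have BV: "B \<in> V" "B \<notin> span {g}" using AB unfolding indep_triple_def by auto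
    have V: "A \<in> V" "D \<in> V" "E \<in> V" "A \<notin> span {g, B}" "D \<notin> span {g, B}" "E \<notin> span {g, B}"
      using AB BD BE unfolding indep_triple_def by auto
    have inm: "A \<in> span {A, D}" "D \<in> span {A, D}" "E \<in> span {A, D}"
      using ADE by (auto intro: span_base)
    have off: "span {B, W} \<noteq> span {B, W'}"
      if "W \<in> span {A, D}" "W' \<in> span {A, D}" "W' \<notin> span {W}" for W W'
      using in_span_if_span_pair_eq[OF subspace_span B that(1,2)] that(3) by blast
    have "distinct [span {B, g}, span {B, A}, span {B, D}, span {B, E}]"
      using span_pair_neq_if_not_mem[OF V(4)] span_pair_neq_if_not_mem[OF V(5)]
        span_pair_neq_if_not_mem[OF V(6)]
        off[OF inm(1,2) indep_triple_not_parallel(2)[OF AD]]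
        off[OF inm(1,3) indep_triple_not_parallel(2)[OF AE]]
        off[OF inm(2,3) indep_triple_not_parallel(2)[OF DE]]
      by simp
    moreover have "{span {B, g}, span {B, A}, span {B, D}, span {B, E}} \<subseteq> planes_through V B"
      using span_g_in_planes_through[OF BV(2)]
        span_pair_in_planes_through[OF V(1) indep_triple_not_parallel(2)[OF indep_triple_sym[OF AB]]]
        span_pair_in_planes_through[OF V(2) indep_triple_not_parallel(2)[OF BD]]
        span_pair_in_planes_through[OF V(3) indep_triple_not_parallel(2)[OF BE]]
      by simp
    ultimately show False by (rule not_four_planes_through[OF BV])
  qed
  then show ?thesis
    using span_pair_eq_if_mem indep_triple_not_parallel[OF AB] by blast
qed

lemma span_pair_contains_all:
  assumes AB: "indep_triple V g A B" and AC: "indep_triple V g A C" and AD: "indep_triple V g A D"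
    and BC: "indep_triple V g B C" and BD: "indep_triple V g B D" and CD: "indep_triple V g C D"
    and ABC: "span {A, B} = span {A, C}" and ABD: "span {A, B} = span {A, D}"
  shows "g \<notin> span {A, B}" "\<forall>v\<in>V. v \<notin> span {g} \<longrightarrow> v \<in> span {A, B}"
proof -
  have inm: "{A, B, C, D} \<subseteq> span {A, B}"
    unfolding insert_subset using ABC ABD by (auto intro: span_base)
  show "g \<notin> span {A, B}"
  proof
    assume "g \<in> span {A, B}"
    have "A \<notin> span {g}" using AB unfolding indep_triple_def by blast
    then have "span {A, B} = span {g, A}"
      using subspace_eq_span_pair[OF subspace_span dim_span_pair_le \<open>g \<in> span {A, B}\<close> _ g_nonzero]
      by (simp add: span_base)
    then show False using AB inm unfolding indep_triple_def by auto
  qed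
  show "\<forall>v\<in>V. v \<notin> span {g} \<longrightarrow> v \<in> span {A, B}"
  proof (intro ballI impI)
    fix Y assume Y: "Y \<in> V" "Y \<notin> span {g}"
    show "Y \<in> span {A, B}"
    proof (rule ccontr)
      assume "Y \<notin> span {A, B}"
      then have "4 \<le> card (planes_through V Y)"
        using four_le_card_planes_through_off_plane[OF finite_V subspace_span _ inm AB AC AD BC BD CD]
        by blast
      moreover have "card (planes_through V Y) \<le> 3" using few_planes Y by blast
      ultimately show False by simp
    qed
  qed
qed

end

lemma three_of_four_eq:
  assumes "a = b \<or> a = c \<or> b = c" "a = b \<or> a = d \<or> b = d" "a = c \<or> a = d \<or> c = d"
    and "c = d \<Longrightarrow> a = c" "b = d \<Longrightarrow> a = b" "b = c \<Longrightarrow> a = b"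
  shows "(a = b \<and> a = c) \<or> (a = b \<and> a = d) \<or> (a = c \<and> a = d)"
  using assms by metis

lemma obtain_five_indep_triples:
  fixes V :: "'a::euclidean_space set"
  assumes "finite V" "g \<noteq> 0" "5 \<le> card (planes_through V g)"
  obtains A1 A2 A3 A4 A5 where
    "indep_triple V g A1 A2" "indep_triple V g A1 A3" "indep_triple V g A1 A4"
    "indep_triple V g A1 A5" "indep_triple V g A2 A3" "indep_triple V g A2 A4"
    "indep_triple V g A2 A5" "indep_triple V g A3 A4" "indep_triple V g A3 A5"
    "indep_triple V g A4 A5"
proof -
  obtain p1 p2 p3 p4 p5 where ps: "{p1, p2, p3, p4, p5} \<subseteq> planes_through V g"
      "distinct [p1, p2, p3, p4, p5]"
    using obtain_five_distinct[OF finite_planes_through[OF assms(1)] assms(3)] by blast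
  have rep: "\<exists>X. X \<in> V \<and> X \<notin> span {g} \<and> p = span {g, X}" if "p \<in> planes_through V g" for p
    using that unfolding planes_through_def by blast
  obtain A1 A2 A3 A4 A5 where A: "A1 \<in> V" "A2 \<in> V" "A3 \<in> V" "A4 \<in> V" "A5 \<in> V"
      "A1 \<notin> span {g}" "A2 \<notin> span {g}" "A3 \<notin> span {g}" "A4 \<notin> span {g}" "A5 \<notin> span {g}"
      "distinct [span {g, A1}, span {g, A2}, span {g, A3}, span {g, A4}, span {g, A5}]"
    using rep ps by (metis insert_subset)
  then show ?thesis
    by (intro that[of A1 A2 A3 A4 A5]) (simp_all add: indep_triple_if_planes_differ[OF assms(2)])
qed

lemma common_plane_if_few_planes_through:
  fixes V :: "'a::euclidean_space set"
  assumes fin: "finite V" and g: "g \<in> V" "g \<noteq> 0" and five: "5 \<le> card (planes_through V g)"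
    and few: "\<forall>h\<in>V. h \<notin> span {g} \<longrightarrow> card (planes_through V h) \<le> 3"
  obtains m where "subspace m" "dim m \<le> 2" "g \<notin> m" "\<forall>v\<in>V. v \<notin> span {g} \<longrightarrow> v \<in> m"
proof -
  note ctx = fin g few
  obtain A1 A2 A3 A4 A5 where G:
    "indep_triple V g A1 A2" "indep_triple V g A1 A3" "indep_triple V g A1 A4"
    "indep_triple V g A1 A5" "indep_triple V g A2 A3" "indep_triple V g A2 A4"
    "indep_triple V g A2 A5" "indep_triple V g A3 A4" "indep_triple V g A3 A5"
    "indep_triple V g A4 A5"
    using obtain_five_indep_triples[OF fin g(2) five] by blast
  have "span {A1, A2} = span {A1, A3} \<and> span {A1, A2} = span {A1, A4}
      \<or> span {A1, A2} = span {A1, A3} \<and> span {A1, A2} = span {A1, A5}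
      \<or> span {A1, A2} = span {A1, A4} \<and> span {A1, A2} = span {A1, A5}"
  proof (rule three_of_four_eq)
    show "span {A1, A2} = span {A1, A3} \<or> span {A1, A2} = span {A1, A4}
        \<or> span {A1, A3} = span {A1, A4}"
      by (rule two_of_three_planes_eq[OF ctx G(1,2,3)])
    show "span {A1, A2} = span {A1, A3} \<or> span {A1, A2} = span {A1, A5}
        \<or> span {A1, A3} = span {A1, A5}"
      by (rule two_of_three_planes_eq[OF ctx G(1,2,4)])
    show "span {A1, A2} = span {A1, A4} \<or> span {A1, A2} = span {A1, A5}
        \<or> span {A1, A4} = span {A1, A5}"
      by (rule two_of_three_planes_eq[OF ctx G(1,3,4)])
    show "span {A1, A2} = span {A1, A4}" if "span {A1, A4} = span {A1, A5}"
      by (rule span_pair_eq_of_coplanar_triple[OF ctx G(1,3,4,6,7,10) that])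
    show "span {A1, A2} = span {A1, A3}" if "span {A1, A3} = span {A1, A5}"
      by (rule span_pair_eq_of_coplanar_triple[OF ctx G(1,2,4,5,7,9) that])
    show "span {A1, A2} = span {A1, A3}" if "span {A1, A3} = span {A1, A4}"
      by (rule span_pair_eq_of_coplanar_triple[OF ctx G(1,2,3,5,6,8) that])
  qed
  then show ?thesis
  proof (elim disjE conjE)
    assume "span {A1, A2} = span {A1, A3}" "span {A1, A2} = span {A1, A4}"
    from span_pair_contains_all[OF ctx G(1,2,3,5,6,8) this] show ?thesis
      by (intro that[of "span {A1, A2}"] subspace_span dim_span_pair_le) simp_all
  next
    assume "span {A1, A2} = span {A1, A3}" "span {A1, A2} = span {A1, A5}"
    from span_pair_contains_all[OF ctx G(1,2,4,5,7,9) this] show ?thesis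
      by (intro that[of "span {A1, A2}"] subspace_span dim_span_pair_le) simp_all
  next
    assume "span {A1, A2} = span {A1, A4}" "span {A1, A2} = span {A1, A5}"
    from span_pair_contains_all[OF ctx G(1,3,4,6,7,10) this] show ?thesis
      by (intro that[of "span {A1, A2}"] subspace_span dim_span_pair_le) simp_all
  qed
qed

section \<open>Prisms\<close>

lemma closed_segment_plus_parallel:
  fixes x y g :: "'a::real_vector"
  assumes "0 \<le> m" "0 \<le> l"
  shows "closed_segment x (x + m *\<^sub>R g) + closed_segment y (y + l *\<^sub>R g)
    = closed_segment (x + y) (x + y + (m + l) *\<^sub>R g)"
proof (rule set_eqI, rule iffI)
  fix z assume "z \<in> closed_segment x (x + m *\<^sub>R g) + closed_segment y (y + l *\<^sub>R g)"
  then obtain u w where u: "0 \<le> u" "u \<le> 1" and w: "0 \<le> w" "w \<le> 1"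
    and z: "z = (x + u *\<^sub>R (m *\<^sub>R g)) + (y + w *\<^sub>R (l *\<^sub>R g))"
    unfolding closed_segment_eq_param set_plus_def by auto
  show "z \<in> closed_segment (x + y) (x + y + (m + l) *\<^sub>R g)"
  proof (cases "m + l = 0")
    case True
    then have "m = 0" "l = 0" using assms by auto
    then show ?thesis using z by simp
  next
    case False
    then have ml: "0 < m + l" using assms by simp
    define r where "r = (u * m + w * l) / (m + l)"
    have "u * m \<le> m" "w * l \<le> l" using u w assms by (auto simp: mult_left_le_one_le)
    then have r: "0 \<le> r" "r \<le> 1" unfolding r_def using ml u w assms by (auto simp: divide_simps)
    have "r * (m + l) = u * m + w * l" unfolding r_def using ml by simp
    moreover have "z = (x + y) + (u * m + w * l) *\<^sub>R g"
      unfolding z by (simp add: algebra_simps)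
    ultimately have "z = (x + y) + r *\<^sub>R ((m + l) *\<^sub>R g)" by simp
    then show ?thesis unfolding closed_segment_eq_param using r by auto
  qed
next
  fix z assume "z \<in> closed_segment (x + y) (x + y + (m + l) *\<^sub>R g)"
  then obtain r where r: "0 \<le> r" "r \<le> 1" and z: "z = (x + y) + r *\<^sub>R ((m + l) *\<^sub>R g)"
    unfolding closed_segment_eq_param by auto
  have "z = (x + r *\<^sub>R (m *\<^sub>R g)) + (y + r *\<^sub>R (l *\<^sub>R g))"
    unfolding z by (simp add: algebra_simps)
  moreover have "x + r *\<^sub>R (m *\<^sub>R g) \<in> closed_segment x (x + m *\<^sub>R g)"
    "y + r *\<^sub>R (l *\<^sub>R g) \<in> closed_segment y (y + l *\<^sub>R g)"
    unfolding closed_segment_eq_param using r by auto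
  ultimately show "z \<in> closed_segment x (x + m *\<^sub>R g) + closed_segment y (y + l *\<^sub>R g)"
    unfolding set_plus_def by blast
qed

lemma segsum_parallel:
  assumes "\<forall>(a, b)\<in>set segs. b - a \<in> span {g}"
  obtains p l where "0 \<le> l" "segsum segs = closed_segment p (p + l *\<^sub>R g)"
  using assms
proof (induction segs arbitrary: thesis)
  case Nil
  show ?case by (rule Nil(1)[of 0 0]) simp_all
next
  case (Cons s segs)
  obtain a b where s: "s = (a, b)" by fastforce
  obtain p l where pl: "0 \<le> l" "segsum segs = closed_segment p (p + l *\<^sub>R g)"
    using Cons.IH Cons.prems(2) by auto
  have "b - a \<in> span {g}" using Cons.prems(2) s by auto
  then obtain k where k: "b - a = k *\<^sub>R g" by (auto simp: span_singleton)
  define a' where "a' = (if 0 \<le> k then a else b)"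
  have seg: "closed_segment a b = closed_segment a' (a' + \<bar>k\<bar> *\<^sub>R g)"
  proof (cases "0 \<le> k")
    case True
    then have "b = a + \<bar>k\<bar> *\<^sub>R g" using k by (simp add: algebra_simps)
    then show ?thesis unfolding a'_def using True by simp
  next
    case False
    then have "a = b + \<bar>k\<bar> *\<^sub>R g" using k by (simp add: algebra_simps)
    then show ?thesis unfolding a'_def using False by (simp add: closed_segment_commute)
  qed
  have "segsum (s # segs) = closed_segment (a' + p) (a' + p + (\<bar>k\<bar> + l) *\<^sub>R g)"
    unfolding s segsum_Cons seg pl(2) by (rule closed_segment_plus_parallel) (use pl in auto)
  then show ?case using pl(1) by (intro Cons.prems(1)[of "\<bar>k\<bar> + l"]) auto
qed

lemma segsum_split_parallel:
  obtains p l where "0 \<le> l"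
    "segsum segs
      = closed_segment p (p + l *\<^sub>R g) + segsum (filter (\<lambda>s. snd s - fst s \<notin> span {g}) segs)"
proof -
  have "\<forall>(a, b)\<in>set (filter (\<lambda>s. snd s - fst s \<in> span {g}) segs). b - a \<in> span {g}"
    by auto
  then obtain p l where pl: "0 \<le> l"
      "segsum (filter (\<lambda>s. snd s - fst s \<in> span {g}) segs) = closed_segment p (p + l *\<^sub>R g)"
    by (rule segsum_parallel)
  have "segsum segs
      = closed_segment p (p + l *\<^sub>R g) + segsum (filter (\<lambda>s. snd s - fst s \<notin> span {g}) segs)"
    unfolding pl(2)[symmetric] by (rule segsum_filter_split)
  with pl(1) show ?thesis by (rule that)
qed

lemma dim_generators_le_Suc:
  fixes segs :: "('a::euclidean_space \<times> 'a) list"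
  shows "dim (set (map (\<lambda>(a, b). b - a) segs))
    \<le> Suc (dim (set (map (\<lambda>(a, b). b - a) (filter (\<lambda>s. snd s - fst s \<notin> span {g}) segs))))"
proof -
  let ?ws = "map (\<lambda>(a, b). b - a) (filter (\<lambda>s. snd s - fst s \<notin> span {g}) segs)"
  have "set (map (\<lambda>(a, b). b - a) segs) \<subseteq> span (insert g (set ?ws))"
  proof
    fix v assume "v \<in> set (map (\<lambda>(a, b). b - a) segs)"
    then obtain a b where ab: "(a, b) \<in> set segs" "v = b - a" by auto
    show "v \<in> span (insert g (set ?ws))"
    proof (cases "v \<in> span {g}")
      case True
      moreover have "span {g} \<subseteq> span (insert g (set ?ws))" by (rule span_mono) auto
      ultimately show ?thesis by blast
    next
      case False
      with ab have "(a, b) \<in> set (filter (\<lambda>s. snd s - fst s \<notin> span {g}) segs)" by simp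
      then have "(\<lambda>(a, b). b - a) (a, b) \<in> set ?ws" unfolding set_map by (rule imageI)
      then have "v \<in> set ?ws" using ab(2) by simp
      then show ?thesis by (intro span_base insertI2)
    qed
  qed
  then have "dim (set (map (\<lambda>(a, b). b - a) segs)) \<le> dim (span (insert g (set ?ws)))"
    by (rule dim_subset)
  also have "\<dots> \<le> Suc (dim (set ?ws))"
    by (simp add: dim_insert)
  finally show ?thesis .
qed

lemma prism_if_other_generators_in_plane:
  fixes segs :: "('a::euclidean_space \<times> 'a) list"
  defines "vs \<equiv> map (\<lambda>(a, b). b - a) segs"
  assumes dim3: "aff_dim (segsum segs) = 3"
    and m: "subspace m" "dim m \<le> 2" "g \<notin> m" and others: "\<forall>v\<in>set vs. v \<notin> span {g} \<longrightarrow> v \<in> m"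
  shows "prism (segsum segs)"
proof -
  define Q where "Q = segsum (filter (\<lambda>s. snd s - fst s \<notin> span {g}) segs)"
  define ws where "ws = map (\<lambda>(a, b). b - a) (filter (\<lambda>s. snd s - fst s \<notin> span {g}) segs)"
  obtain p l where pl: "0 \<le> l" "segsum segs = closed_segment p (p + l *\<^sub>R g) + Q"
    unfolding Q_def by (rule segsum_split_parallel)
  have QZ: "Q = zonotope_of (sum_list (map fst (filter (\<lambda>s. snd s - fst s \<notin> span {g}) segs))) ws"
    unfolding Q_def ws_def by (rule segsum_eq_zonotope_of)
  have ws_m: "set ws \<subseteq> m"
  proof
    fix v assume "v \<in> set ws"
    then obtain a b where ab: "(a, b) \<in> set segs" "b - a \<notin> span {g}" "v = b - a"
      unfolding ws_def by auto
    then have "v \<in> set vs"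
      unfolding vs_def set_map by (intro rev_image_eqI[of "(a, b)"]) simp_all
    then show "v \<in> m" using others ab(2,3) by blast
  qed
  have dirQ: "dirspace Q \<subseteq> m"
    unfolding QZ dirspace_zonotope_of using ws_m m(1) by (rule span_minimal)
  have "dim (set vs) = 3"
    using dim3 by (simp add: segsum_eq_zonotope_of aff_dim_zonotope_of vs_def)
  then have "dim (set ws) = 2"
    using dim_generators_le_Suc[of segs g] dim_subset[OF ws_m] m(2)
    unfolding ws_def vs_def by simp
  then have affQ: "aff_dim Q = 2" unfolding QZ by (simp add: aff_dim_zonotope_of)
  have "l \<noteq> 0"
  proof
    assume "l = 0"
    then have "segsum segs = (+) p ` Q" using pl(2) by (simp add: set_plus_def image_def)
    then show False using dim3 affQ by (simp add: aff_dim_translation_eq)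
  qed
  have "(p + l *\<^sub>R g) - p \<notin> dirspace Q"
  proof
    assume "(p + l *\<^sub>R g) - p \<in> dirspace Q"
    then have "l *\<^sub>R g \<in> m" using dirQ by auto
    then have "(1 / l) *\<^sub>R (l *\<^sub>R g) \<in> m" by (rule subspace_scale[OF m(1)])
    then show False using \<open>l \<noteq> 0\<close> m(3) by simp
  qed
  moreover have "polytope Q" unfolding Q_def by (rule polytope_segsum)
  moreover have "segsum segs = msum Q (closed_segment p (p + l *\<^sub>R g))"
    unfolding msum_eq_set_plus pl(2) by (simp add: add.commute)
  ultimately show ?thesis unfolding prism_def using affQ by blast
qed

lemma exists_generator_on_four_planes:
  fixes segs :: "('a::euclidean_space \<times> 'a) list"
  defines "vs \<equiv> map (\<lambda>(a, b). b - a) segs"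
  assumes "aff_dim (segsum segs) = 3" "\<not> prism (segsum segs)"
    and g: "g \<in> set vs" "g \<noteq> 0" and five: "5 \<le> card (planes_through (set vs) g)"
  obtains h where "h \<in> set vs" "h \<notin> span {g}" "4 \<le> card (planes_through (set vs) h)"
proof (rule ccontr)
  assume "\<not> thesis"
  with that have "\<forall>h\<in>set vs. h \<notin> span {g} \<longrightarrow> card (planes_through (set vs) h) \<le> 3"
    by force
  then obtain m where "subspace m" "dim m \<le> 2" "g \<notin> m" "\<forall>v\<in>set vs. v \<notin> span {g} \<longrightarrow> v \<in> m"
    by (rule common_plane_if_few_planes_through[OF finite_set g five])
  then have "prism (segsum segs)"
    using prism_if_other_generators_in_plane[of segs m g] assms(2) unfolding vs_def by blast
  with assms(3) show False by contradiction
qed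

theorem lemma4p4:
  fixes P E :: "(real^3) set"
  assumes "zonotope P" and "aff_dim P = 3" and "\<not> prism P"
    and "E edge_of P" and "card (belt P E) = 10"
  shows "\<exists>M. M edge_of P \<and> \<not> parallel_sets E M \<and> card (belt P M) \<ge> 8"
proof -
  obtain segs where P: "P = segsum segs" using assms(1) unfolding zonotope_def by blast
  define vs where "vs = map (\<lambda>(a, b). b - a) segs"
  have PZ: "P = zonotope_of (sum_list (map fst segs)) vs"
    unfolding P vs_def by (rule segsum_eq_zonotope_of)
  note dim3 = assms(2)[unfolded PZ]
  obtain g where g: "g \<in> set vs" "g \<noteq> 0" "dirspace E = span {g}"
    using assms(4) unfolding PZ by (rule edge_of_zonotope_of_dirspace)
  have "card (belt P E) \<le> 2 * card (planes_through (set vs) g)"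
    using card_belt_le[OF dim3 g(2,3)] unfolding PZ .
  then have "5 \<le> card (planes_through (set vs) g)" using assms(5) by simp
  then obtain h where h: "h \<in> set vs" "h \<notin> span {g}" "4 \<le> card (planes_through (set vs) h)"
    using exists_generator_on_four_planes[of segs g] assms(2,3) g(1,2) unfolding P vs_def by blast
  then have "h \<noteq> 0" using span_zero by blast
  then obtain M where M: "M edge_of P" "dirspace M = span {h}"
      "2 * card (planes_through (set vs) h) \<le> card (belt P M)"
    unfolding PZ by (rule exists_edge_card_belt_ge[OF dim3 h(1)])
  have "\<not> parallel_sets E M"
    using h(2) unfolding parallel_sets_def g(3) M(2) by (metis span_base singletonI)
  with M h(3) show ?thesis by (intro exI[of _ M]) simp
qed

end
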